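(* Let $\Lambda\ge 1$ and let $\mathcal{H}_\Lambda$ be the real vector space of $\Lambda\times\Lambda$ Hermitian matrices $\phi=(\phi_{ab})_{a,b=1}^{\Lambda}$, equipped with its Lebesgue measure $d\phi$. Let $S:\mathcal{H}_\Lambda\to\mathbb{R}$ be a finite sum of traces, $S[\phi]=\sum_k g_k\,\mathrm{Tr}(\phi^k)$. For a scale parameter $N$, let $R=([r_N]_{ab;cd})_{a,b,c,d=1}^{\Lambda}$ be complex coefficients satisfying $[r_N]_{ab;cd}=[r_N]_{cd;ab}$ for all $a,b,c,d$, and set $\Delta S_N[\phi]=\frac12\sum_{a,b,c,d}\phi_{ab}[r_N]_{ab;cd}\phi_{cd}$. For a complex $\Lambda\times\Lambda$ matrix $J$ write $J\cdot\phi=\sum_{a,b}J_{ab}\phi_{ab}$ and define $$\mathcal{Z}_N[J]=e^{\mathcal{W}_N[J]}=\int_{\mathcal{H}_\Lambda}d\phi\;e^{-S[\phi]-\Delta S_N[\phi]+J\cdot\phi},$$ where the entries $J_{ab}$ are treated as independent complex variables. Assume that for every $J$ this integral, as well as the integrals obtained by inserting any polynomial in the entries of $\phi$ into the integrand, converge absolutely (so that derivatives $\partial/\partial J_{ab}$ may be taken under the integral sign). Then for every fixed pair of indices $a,c\in\{1,\dots,\Lambda\}$, $$\sum_{b,d,e}\frac{\partial}{\partial J_{de}}\Big([r_N]_{ab;de}\frac{\partial}{\partial J_{cb}}-[r_N]_{bc;de}\frac{\partial}{\partial J_{ba}}\Big)e^{\mathcal{W}_N[J]}-\sum_b\Big(J_{ab}\frac{\partial}{\partial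 J_{cb}}-J_{bc}\frac{\partial}{\partial J_{ba}}\Big)e^{\mathcal{W}_N[J]}=0 .$$
   Context: $\mathcal{Z}_N$ is the regularized partition function of a Hermitian matrix model with a (generally non-unitarily-invariant) quadratic regulator term $\Delta S_N$; $\mathcal{W}_N=\ln\mathcal{Z}_N$. In the identity there is summation over $b,d,e$ but not over $a$ and $c$. *)

theory Defs
  imports "HOL-Analysis.Analysis"
begin

text \<open>Matrices are represented as functions on indices; only indices below
  the size Lambda matter.  Indices run over 0..Lambda-1.\<close>

text \<open>Real linear coordinates on the space of Lambda x Lambda Hermitian matrices:
  diagonal entries phi_aa = x(a,a); for a < b: phi_ab = x(a,b) + i x(b,a)
  and phi_ba = conj phi_ab.  This is a linear isomorphism from R^(Lambda^2) onto H_Lambda.\<close>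
definition herm :: "(nat \<times> nat \<Rightarrow> real) \<Rightarrow> nat \<Rightarrow> nat \<Rightarrow> complex" where
  "herm x a b =
     (if a = b then complex_of_real (x (a, a))
      else if a < b then Complex (x (a, b)) (x (b, a))
      else Complex (x (b, a)) (- x (a, b)))"

text \<open>Lebesgue measure on H_Lambda, transported along the coordinates above
  (Lebesgue measure on R^(Lambda^2)).\<close>
definition herm_lebesgue :: "nat \<Rightarrow> (nat \<times> nat \<Rightarrow> real) measure" where
  "herm_lebesgue \<Lambda> = PiM ({..<\<Lambda>} \<times> {..<\<Lambda>}) (\<lambda>_. lborel)"

fun mpow :: "nat \<Rightarrow> (nat \<Rightarrow> nat \<Rightarrow> complex) \<Rightarrow> nat \<Rightarrow> nat \<Rightarrow> nat \<Rightarrow> complex" where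
  "mpow \<Lambda> A 0 = (\<lambda>i j. if i = j then 1 else 0)"
| "mpow \<Lambda> A (Suc k) = (\<lambda>i j. \<Sum>l<\<Lambda>. mpow \<Lambda> A k i l * A l j)"

definition mtrace :: "nat \<Rightarrow> (nat \<Rightarrow> nat \<Rightarrow> complex) \<Rightarrow> complex" where
  "mtrace \<Lambda> A = (\<Sum>i<\<Lambda>. A i i)"

definition trace_action :: "nat \<Rightarrow> (nat \<Rightarrow> real) \<Rightarrow> nat \<Rightarrow> (nat \<Rightarrow> nat \<Rightarrow> complex) \<Rightarrow> complex" where
  "trace_action \<Lambda> g K \<phi> = (\<Sum>k\<le>K. complex_of_real (g k) * mtrace \<Lambda> (mpow \<Lambda> \<phi> k))"

definition regulator :: "nat \<Rightarrow> (nat \<Rightarrow> nat \<Rightarrow> nat \<Rightarrow> nat \<Rightarrow> complex) \<Rightarrow> (nat \<Rightarrow> nat \<Rightarrow> complex) \<Rightarrow> complex" where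
  "regulator \<Lambda> r \<phi> = (1/2) * (\<Sum>a<\<Lambda>. \<Sum>b<\<Lambda>. \<Sum>c<\<Lambda>. \<Sum>d<\<Lambda>. \<phi> a b * r a b c d * \<phi> c d)"

definition source :: "nat \<Rightarrow> (nat \<times> nat \<Rightarrow> complex) \<Rightarrow> (nat \<Rightarrow> nat \<Rightarrow> complex) \<Rightarrow> complex" where
  "source \<Lambda> J \<phi> = (\<Sum>a<\<Lambda>. \<Sum>b<\<Lambda>. J (a, b) * \<phi> a b)"

definition integrand ::
  "nat \<Rightarrow> (nat \<Rightarrow> real) \<Rightarrow> nat \<Rightarrow> (nat \<Rightarrow> nat \<Rightarrow> nat \<Rightarrow> nat \<Rightarrow> complex) \<Rightarrow> (nat \<times> nat \<Rightarrow> complex)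
   \<Rightarrow> (nat \<times> nat \<Rightarrow> real) \<Rightarrow> complex" where
  "integrand \<Lambda> g K r J x =
     exp (- trace_action \<Lambda> g K (herm x) - regulator \<Lambda> r (herm x) + source \<Lambda> J (herm x))"

definition Zpart ::
  "nat \<Rightarrow> (nat \<Rightarrow> real) \<Rightarrow> nat \<Rightarrow> (nat \<Rightarrow> nat \<Rightarrow> nat \<Rightarrow> nat \<Rightarrow> complex) \<Rightarrow> (nat \<times> nat \<Rightarrow> complex) \<Rightarrow> complex" where
  "Zpart \<Lambda> g K r J = integral\<^sup>L (herm_lebesgue \<Lambda>) (integrand \<Lambda> g K r J)"

definition pderivJ :: "((nat \<times> nat \<Rightarrow> complex) \<Rightarrow> complex) \<Rightarrow> nat \<times> nat \<Rightarrow> (nat \<times> nat \<Rightarrow> complex) \<Rightarrow> complex" where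
  "pderivJ F p J = deriv (\<lambda>z. F (J(p := z))) (J p)"

end

theory Submission
  imports Defs
begin

text \<open>
  The identity is the infinitesimal form of the invariance of the trace action
  \<open>S\<close> under unitary conjugation \<open>\<phi> \<mapsto> U \<phi> U\<^sup>*\<close>.
  Write \<open>w\<close> for the exponent of the integrand and \<open>D\<^sub>Y w\<close> for its derivative in
  the matrix direction \<open>Y\<close>. Integrating the derivative of \<open>\<phi>\<^sub>u\<^sub>v e\<^sup>w\<close> along a
  real coordinate line of \<open>\<phi>\<close> gives zero, because all moments are integrable; a
  complex combination of two coordinates turns this into the Schwinger-Dyson
  equation \<open>\<integral> (\<delta>\<^sub>u\<^sub>i \<delta>\<^sub>v\<^sub>j + \<phi>\<^sub>u\<^sub>v D\<^bsub>E\<^sub>i\<^sub>j\<^esub> w) e\<^sup>w = 0\<close> for every matrix unit \<open>E\<^sub>i\<^sub>j\<close>.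
  Summing these equations over the matrix units that make up the commutator
  \<open>[E\<^sub>a\<^sub>c, \<phi>]\<close>, the \<open>\<delta>\<close>-terms cancel and the trace action drops out, since
  \<open>D\<^bsub>[X,\<phi>]\<^esub> tr \<phi>\<^sup>k = tr [X, \<phi>\<^sup>k] = 0\<close>; what is left is a polynomial in the
  entries of \<open>\<phi>\<close> coming from the regulator and the source term. Finally the
  \<open>J\<close>-derivatives of \<open>Z\<^sub>N\<close> are the corresponding moments of \<open>\<phi>\<close>: differentiation
  under the integral sign is legitimate because \<open>e\<^sup>|\<^sup>h\<^sup>|\<close> is dominated by four
  exponentials \<open>|e\<^sup>c\<^sup>h|\<close>, \<open>c = \<plusminus>1 \<plusminus> i\<close>, each integrable by hypothesis.
\<close>

section \<open>Integrals of derivatives\<close>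

lemma tendsto_integral_indicator_at_top:
  fixes f :: "real \<Rightarrow> 'a::{banach, second_countable_topology}" and A :: "real \<Rightarrow> real set"
  assumes f: "integrable lborel f" and A: "\<And>T. A T \<in> sets borel" and B: "B \<in> sets borel"
    and ev: "\<And>x. eventually (\<lambda>T. indicator (A T) x = (indicator B x :: real)) at_top"
  shows "((\<lambda>T. \<integral>x. indicator (A T) x *\<^sub>R f x \<partial>lborel) \<longlongrightarrow> (\<integral>x. indicator B x *\<^sub>R f x \<partial>lborel)) at_top"
proof (rule integral_dominated_convergence_at_top[where w="\<lambda>x. norm (f x)"])
  have "f \<in> borel_measurable lborel"
    using f by auto
  then show "(\<lambda>x. indicator B x *\<^sub>R f x) \<in> borel_measurable lborel"
    and "\<And>T. (\<lambda>x. indicator (A T) x *\<^sub>R f x) \<in> borel_measurable lborel"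
    using A B by (auto intro!: borel_measurable_scaleR borel_measurable_indicator)
  show "integrable lborel (\<lambda>x. norm (f x))"
    using f by auto
  show "AE x in lborel. ((\<lambda>T. indicator (A T) x *\<^sub>R f x) \<longlongrightarrow> indicator B x *\<^sub>R f x) at_top"
  proof (intro AE_I2 tendsto_eventually)
    show "\<forall>\<^sub>F T in at_top. indicator (A T) x *\<^sub>R f x = indicator B x *\<^sub>R f x" for x
      using ev[of x] by eventually_elim simp
  qed
  show "\<forall>\<^sub>F T in at_top. AE x in lborel. norm (indicator (A T) x *\<^sub>R f x) \<le> norm (f x)"
    by (auto split: split_indicator)
qed

lemma integrable_tendsto_at_top_imp_eq_0:
  fixes g :: "real \<Rightarrow> 'a::{banach, second_countable_topology}"
  assumes g: "integrable lborel g" and lim: "(g \<longlongrightarrow> l) at_top"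
  shows "l = 0"
proof (rule ccontr)
  assume "l \<noteq> 0"
  define \<epsilon> where "\<epsilon> = norm l / 2"
  have \<epsilon>: "\<epsilon> > 0"
    using \<open>l \<noteq> 0\<close> by (simp add: \<epsilon>_def)
  have "\<forall>\<^sub>F t in at_top. \<epsilon> < norm (g t)"
    using order_tendstoD(1)[OF tendsto_norm[OF lim], of \<epsilon>] \<open>l \<noteq> 0\<close> by (simp add: \<epsilon>_def)
  then obtain N where N: "\<And>t. t \<ge> N \<Longrightarrow> \<epsilon> < norm (g t)"
    by (auto simp: eventually_at_top_linorder)
  have "\<epsilon> * real n \<le> (\<integral>x. norm (g x) \<partial>lborel)" for n :: nat
  proof -
    have "\<epsilon> * real n = (\<integral>x. indicator {N..N + real n} x * \<epsilon> \<partial>lborel)"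
      by simp
    also have "\<dots> \<le> (\<integral>x. norm (g x) \<partial>lborel)"
      using g N by (intro integral_mono) (auto split: split_indicator intro: less_imp_le)
    finally show ?thesis .
  qed
  moreover obtain n :: nat where "(\<integral>x. norm (g x) \<partial>lborel) / \<epsilon> < n"
    using reals_Archimedean2 by blast
  ultimately show False
    using \<epsilon> by (simp add: field_simps not_le[symmetric])
qed

lemma tendsto_at_top_eq_0_of_integrable_deriv:
  fixes g g' :: "real \<Rightarrow> 'a::euclidean_space"
  assumes g: "integrable lborel g" and g': "integrable lborel g'"
    and cont: "continuous_on UNIV g'" and deriv: "\<And>t. (g has_vector_derivative g' t) (at t)"
  shows "(g \<longlongrightarrow> 0) at_top"
proof -
  let ?I = "\<lambda>A. \<integral>x. indicator A x *\<^sub>R g' x \<partial>lborel"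
  have ftc: "?I {0..T} = g T - g 0" if "0 \<le> T" for T
    using that by (intro integral_FTC_atLeastAtMost)
      (auto intro: has_vector_derivative_at_within deriv continuous_on_subset[OF cont])
  have "((\<lambda>T. g 0 + ?I {0..T}) \<longlongrightarrow> g 0 + ?I {0..}) at_top"
  proof (intro tendsto_add tendsto_const tendsto_integral_indicator_at_top[OF g'])
    show "\<forall>\<^sub>F T in at_top. indicator {0..T} x = (indicator {0..} x :: real)" for x :: real
      using eventually_ge_at_top[of x] by eventually_elim (auto split: split_indicator)
  qed auto
  moreover have "\<forall>\<^sub>F T in at_top. g 0 + ?I {0..T} = g T"
    using eventually_ge_at_top[of 0] by eventually_elim (simp add: ftc)
  ultimately have "(g \<longlongrightarrow> g 0 + ?I {0..}) at_top"
    by (rule Lim_transform_eventually)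
  with g show ?thesis
    by (metis integrable_tendsto_at_top_imp_eq_0)
qed

lemma lborel_integral_vector_derivative_eq_0:
  fixes g g' :: "real \<Rightarrow> 'a::euclidean_space"
  assumes g: "integrable lborel g" and g': "integrable lborel g'"
    and cont: "continuous_on UNIV g'" and deriv: "\<And>t. (g has_vector_derivative g' t) (at t)"
  shows "integral\<^sup>L lborel g' = 0"
proof -
  let ?I = "\<lambda>A. \<integral>x. indicator A x *\<^sub>R g' x \<partial>lborel"
  have g_top: "(g \<longlongrightarrow> 0) at_top"
    using assms by (rule tendsto_at_top_eq_0_of_integrable_deriv)
  have g_bot: "((\<lambda>T. g (-T)) \<longlongrightarrow> 0) at_top"
  proof (rule tendsto_at_top_eq_0_of_integrable_deriv)
    show "integrable lborel (\<lambda>T. g (-T))"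
      using lborel_integrable_real_affine[OF g, of "-1" 0] by simp
    show "integrable lborel (\<lambda>T. - g' (-T))"
      using lborel_integrable_real_affine[OF g', of "-1" 0] by simp
    show "continuous_on UNIV (\<lambda>T. - g' (-T))"
      by (intro continuous_intros continuous_on_compose2[OF cont]) auto
    show "((\<lambda>T. g (-T)) has_vector_derivative - g' (-t)) (at t)" for t
      using vector_diff_chain_at[OF has_vector_derivative_minus[OF has_vector_derivative_id] deriv]
      by (simp add: o_def)
  qed
  have "((\<lambda>T. ?I {-T..T}) \<longlongrightarrow> ?I UNIV) at_top"
  proof (rule tendsto_integral_indicator_at_top[OF g'])
    show "\<forall>\<^sub>F T in at_top. indicator {-T..T} x = (indicator UNIV x :: real)" for x :: real
      using eventually_ge_at_top[of "\<bar>x\<bar>"] by eventually_elim (auto split: split_indicator)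
  qed auto
  moreover have "((\<lambda>T. ?I {-T..T}) \<longlongrightarrow> 0) at_top"
  proof (rule Lim_transform_eventually)
    show "((\<lambda>T. g T - g (-T)) \<longlongrightarrow> 0) at_top"
      using tendsto_diff[OF g_top g_bot] by simp
    show "\<forall>\<^sub>F T in at_top. g T - g (-T) = ?I {-T..T}"
      using eventually_ge_at_top[of 0] by eventually_elim
        (auto intro!: integral_FTC_atLeastAtMost[symmetric] has_vector_derivative_at_within deriv
          continuous_on_subset[OF cont])
  qed
  ultimately have "?I UNIV = 0"
    by (rule tendsto_unique[OF trivial_limit_at_top_linorder])
  then show ?thesis
    by simp
qed

lemma AE_PiM_integrable_line:
  fixes G :: "('i \<Rightarrow> real) \<Rightarrow> 'a::{banach, second_countable_topology}"
  assumes J: "finite J" "k \<notin> J"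
    and G: "integrable (PiM (insert k J) (\<lambda>_. lborel)) G"
  shows "AE x in PiM J (\<lambda>_. lborel). integrable lborel (\<lambda>t. G (x(k := t)))"
proof -
  interpret product_sigma_finite "\<lambda>_::'i. lborel :: real measure"
    by standard
  interpret JJ: finite_product_sigma_finite "\<lambda>_::'i. lborel :: real measure" J
    by standard (rule J(1))
  interpret KK: finite_product_sigma_finite "\<lambda>_::'i. lborel :: real measure" "{k}"
    by standard simp
  interpret P: pair_sigma_finite "PiM J (\<lambda>_. lborel :: real measure)" "PiM {k} (\<lambda>_. lborel :: real measure)" ..
  have Gm: "G \<in> borel_measurable (PiM (insert k J) (\<lambda>_. lborel))"
    using G by auto
  have "integrable (distr (PiM J (\<lambda>_. lborel) \<Otimes>\<^sub>M PiM {k} (\<lambda>_. lborel)) (PiM (J \<union> {k}) (\<lambda>_. lborel))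
      (merge J {k})) G"
    using distr_merge[of J "{k}"] J G by simp
  then have "integrable (PiM J (\<lambda>_. lborel) \<Otimes>\<^sub>M PiM {k} (\<lambda>_. lborel)) (\<lambda>xy. G (merge J {k} xy))"
    by (rule integrable_distr[OF measurable_merge])
  from P.AE_integrable_fst'[OF this]
  have "AE x in PiM J (\<lambda>_. lborel). integrable (PiM {k} (\<lambda>_. lborel)) (\<lambda>y. G (merge J {k} (x, y)))" .
  then show ?thesis
  proof (rule AE_mp[OF _ AE_I2], intro impI)
    fix x assume x: "x \<in> space (PiM J (\<lambda>_. lborel :: real measure))"
      and int: "integrable (PiM {k} (\<lambda>_. lborel)) (\<lambda>y. G (merge J {k} (x, y)))"
    have "(\<lambda>t. G (x(k := t))) \<in> borel_measurable lborel"
      using measurable_comp[OF measurable_component_update Gm, OF x \<open>k \<notin> J\<close>] unfolding comp_def .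
    moreover have "integrable (PiM {k} (\<lambda>_. lborel)) (\<lambda>y. G (x(k := y k)))"
    proof (rule Bochner_Integration.integrable_cong[THEN iffD1, OF refl _ int])
      fix y assume "y \<in> space (PiM {k} (\<lambda>_. lborel :: real measure))"
      then show "G (merge J {k} (x, y)) = G (x(k := y k))"
        using x J by (auto intro!: arg_cong[where f=G] simp: merge_def space_PiM extensional_def PiE_def fun_eq_iff)
    qed
    ultimately have "integrable (distr (PiM {k} (\<lambda>_. lborel)) lborel (\<lambda>y. y k)) (\<lambda>t. G (x(k := t)))"
      by (subst integrable_distr_eq[OF measurable_component_singleton]) auto
    then show "integrable lborel (\<lambda>t. G (x(k := t)))"
      using distr_singleton[of k] by simp
  qed
qed

lemma PiM_lborel_integral_partial_deriv_eq_0: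
  fixes F F' :: "('i \<Rightarrow> real) \<Rightarrow> 'a::euclidean_space"
  assumes "finite I" "k \<in> I"
    and F: "integrable (PiM I (\<lambda>_. lborel)) F" and F': "integrable (PiM I (\<lambda>_. lborel)) F'"
    and deriv: "\<And>x s. ((\<lambda>t. F (x(k := t))) has_vector_derivative F' (x(k := s))) (at s)"
    and cont: "\<And>x. continuous_on UNIV (\<lambda>t. F' (x(k := t)))"
  shows "integral\<^sup>L (PiM I (\<lambda>_. lborel)) F' = 0"
proof -
  interpret product_sigma_finite "\<lambda>_::'i. lborel :: real measure"
    by standard
  define J where "J = I - {k}"
  have IJ: "I = insert k J" "finite J" "k \<notin> J"
    using assms(1,2) by (auto simp: J_def)
  have "integral\<^sup>L (PiM I (\<lambda>_. lborel)) F' = (\<integral>x. (\<integral>t. F' (x(k := t)) \<partial>lborel) \<partial>PiM J (\<lambda>_. lborel))"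
    using product_integral_insert[OF IJ(2,3), of F'] F' IJ(1) by simp
  also have "\<dots> = 0"
  proof (rule integral_eq_zero_AE)
    have "AE x in PiM J (\<lambda>_. lborel). integrable lborel (\<lambda>t. F (x(k := t)))"
      and "AE x in PiM J (\<lambda>_. lborel). integrable lborel (\<lambda>t. F' (x(k := t)))"
      using AE_PiM_integrable_line[OF IJ(2,3)] F F' IJ(1) by auto
    then show "AE x in PiM J (\<lambda>_. lborel). (\<integral>t. F' (x(k := t)) \<partial>lborel) = 0"
      by eventually_elim (rule lborel_integral_vector_derivative_eq_0[OF _ _ cont deriv])
  qed
  finally show ?thesis .
qed

section \<open>Differentiating exponential integrals\<close>

lemma norm_exp_sub_1_sub_le:
  fixes u :: "'a::{real_normed_div_algebra, banach}"
  shows "norm (exp u - 1 - u) \<le> norm u ^ 2 * exp (norm u)"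
proof -
  define a where "a = norm u"
  have sa: "summable (\<lambda>n. a ^ n / fact n)"
    using summable_exp[of a] by (simp add: divide_inverse mult.commute)
  have sa2: "summable (\<lambda>n. a ^ (n + 2) / fact (n + 2))"
    using summable_ignore_initial_segment[OF sa, of 2] by simp
  have norm_term: "norm (inverse (fact (n + 2)) *\<^sub>R u ^ (n + 2)) = a ^ (n + 2) / fact (n + 2)" for n
    by (simp add: a_def norm_power norm_mult divide_inverse mult.commute)
  have "norm (exp u - 1 - u) = norm (\<Sum>n. inverse (fact (n + 2)) *\<^sub>R u ^ (n + 2))"
    using exp_first_two_terms[of u] by simp
  also have "\<dots> \<le> (\<Sum>n. norm (inverse (fact (n + 2)) *\<^sub>R u ^ (n + 2)))"
    by (rule summable_norm) (unfold norm_term, rule sa2)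
  also have "\<dots> = (\<Sum>n. a ^ (n + 2) / fact (n + 2))"
    unfolding norm_term ..
  also have "\<dots> \<le> (\<Sum>n. a ^ 2 * (a ^ n / fact n))"
  proof (rule suminf_le[OF _ sa2 summable_mult[OF sa]])
    fix n
    have "(fact n :: real) \<le> fact (n + 2)"
      by (rule fact_mono) simp
    then have "a ^ n / fact (n + 2) \<le> a ^ n / fact n"
      by (intro divide_left_mono) (auto simp: a_def)
    then have "a ^ 2 * (a ^ n / fact (n + 2)) \<le> a ^ 2 * (a ^ n / fact n)"
      by (rule mult_left_mono) simp
    then show "a ^ (n + 2) / fact (n + 2) \<le> a ^ 2 * (a ^ n / fact n)"
      by (simp only: power_add mult.commute times_divide_eq_right)
  qed
  also have "\<dots> = a ^ 2 * exp a"
    using suminf_mult[OF sa, of "a ^ 2"] exp_converges[of a]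
    by (simp add: sums_iff divide_inverse mult.commute)
  finally show ?thesis
    by (simp add: a_def)
qed

lemma norm_exp_mult_sub_1_sub_le:
  fixes w u :: "'a::{real_normed_div_algebra, banach}"
  assumes "norm w \<le> 1"
  shows "norm (exp (w * u) - 1 - w * u) \<le> norm w ^ 2 * norm u ^ 2 * exp (norm u)"
proof -
  have "norm (w * u) \<le> norm u"
    using assms by (simp add: norm_mult mult_left_le_one_le)
  then have "norm (w * u) ^ 2 * exp (norm (w * u)) \<le> norm w ^ 2 * norm u ^ 2 * exp (norm u)"
    by (simp add: norm_mult power_mult_distrib mult_left_mono)
  with norm_exp_sub_1_sub_le[of "w * u"] show ?thesis
    by linarith
qed

lemma exp_norm_le_sum_exp_Re:
  fixes h :: complex
  shows "exp (norm h) \<le> exp (Re ((1 + \<i>) * h)) + exp (Re ((1 - \<i>) * h))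
    + exp (Re ((-1 + \<i>) * h)) + exp (Re ((-1 - \<i>) * h))"
proof -
  have "exp (norm h) \<le> exp (\<bar>Re h\<bar> + \<bar>Im h\<bar>)"
    using cmod_le[of h] by simp
  also have "\<dots> \<le> exp (Re ((1 + \<i>) * h)) + exp (Re ((1 - \<i>) * h))
      + exp (Re ((-1 + \<i>) * h)) + exp (Re ((-1 - \<i>) * h))"
    by (cases "Re h \<ge> 0"; cases "Im h \<ge> 0") (auto simp: add_pos_pos add_nonneg_nonneg)
  finally show ?thesis .
qed

lemma integrable_norm_mult_exp_norm:
  fixes f h :: "'x \<Rightarrow> complex"
  assumes h: "h \<in> borel_measurable M" and int: "\<And>z. integrable M (\<lambda>x. f x * exp (z * h x))"
  shows "integrable M (\<lambda>x. norm (f x) * exp (norm (h x)))"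
proof -
  let ?G = "\<lambda>c x. norm (f x * exp (c * h x))"
  let ?S = "\<lambda>x. ?G (1 + \<i>) x + ?G (1 - \<i>) x + ?G (-1 + \<i>) x + ?G (-1 - \<i>) x"
  have "f \<in> borel_measurable M"
    using borel_measurable_integrable[OF int[of 0]] by simp
  then have meas: "(\<lambda>x. norm (f x) * exp (norm (h x))) \<in> borel_measurable M"
    using h by (intro borel_measurable_times measurable_compose[OF _ borel_measurable_exp]
        measurable_compose[OF _ borel_measurable_norm])
  show ?thesis
  proof (rule Bochner_Integration.integrable_bound[OF _ meas AE_I2])
    show "integrable M ?S"
      using int by (intro Bochner_Integration.integrable_add integrable_norm)
    fix x
    have "norm (f x) * exp (norm (h x)) \<le> norm (f x) * (exp (Re ((1 + \<i>) * h x)) + exp (Re ((1 - \<i>) * h x))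
        + exp (Re ((-1 + \<i>) * h x)) + exp (Re ((-1 - \<i>) * h x)))"
      by (intro mult_left_mono exp_norm_le_sum_exp_Re) simp
    also have "\<dots> = ?S x"
      by (simp add: norm_mult norm_exp_eq_Re algebra_simps)
    finally show "norm (norm (f x) * exp (norm (h x))) \<le> norm (?S x)"
      by simp
  qed
qed

lemma has_field_derivative_quadratic_remainder:
  fixes F :: "'a::real_normed_field \<Rightarrow> 'a"
  assumes "\<And>w. norm w \<le> 1 \<Longrightarrow> norm (F (z0 + w) - F z0 - w * D) \<le> norm w ^ 2 * C"
  shows "(F has_field_derivative D) (at z0)"
proof -
  have "((\<lambda>z. (F z - F z0) / (z - z0) - D) \<longlongrightarrow> 0) (at z0)"
  proof (rule Lim_null_comparison)
    show "\<forall>\<^sub>F z in at z0. norm ((F z - F z0) / (z - z0) - D) \<le> norm (z - z0) * C"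
      unfolding eventually_at
    proof (intro exI[of _ 1] conjI ballI impI)
      fix z assume z: "z \<noteq> z0 \<and> dist z z0 < 1"
      define w where "w = z - z0"
      have "w \<noteq> 0" "norm w \<le> 1"
        using z by (auto simp: w_def dist_norm)
      have "norm ((F z - F z0) / (z - z0) - D) = norm (F (z0 + w) - F z0 - w * D) / norm w"
        using \<open>w \<noteq> 0\<close> by (simp add: w_def norm_divide[symmetric] field_simps)
      also have "\<dots> \<le> norm w ^ 2 * C / norm w"
        using assms[OF \<open>norm w \<le> 1\<close>] by (simp add: divide_right_mono)
      also have "\<dots> = norm (z - z0) * C"
        using \<open>w \<noteq> 0\<close> by (simp add: w_def power2_eq_square)
      finally show "norm ((F z - F z0) / (z - z0) - D) \<le> norm (z - z0) * C" .
    qed simp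
    show "((\<lambda>z. norm (z - z0) * C) \<longlongrightarrow> 0) (at z0)"
      by (intro tendsto_mult_left_zero tendsto_norm_zero LIM_zero tendsto_ident_at)
  qed
  then show ?thesis
    by (simp add: has_field_derivative_iff LIM_zero_iff)
qed

lemma has_field_derivative_integral_exp:
  fixes f h :: "'x \<Rightarrow> complex"
  assumes h: "h \<in> borel_measurable M"
    and int: "\<And>z n. n \<le> 2 \<Longrightarrow> integrable M (\<lambda>x. f x * h x ^ n * exp (z * h x))"
  shows "((\<lambda>z. \<integral>x. f x * exp (z * h x) \<partial>M) has_field_derivative
      (\<integral>x. f x * h x * exp (z0 * h x) \<partial>M)) (at z0)"
proof (rule has_field_derivative_quadratic_remainder)
  define E0 where "E0 x = f x * exp (z0 * h x)" for x
  define B where "B x = norm (f x * h x ^ 2 * exp (z0 * h x)) * exp (norm (h x))" for x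
  have int0: "integrable M (\<lambda>x. f x * exp (z * h x))" for z
    using int[of 0] by simp
  have int1: "integrable M (\<lambda>x. f x * h x * exp (z * h x))" for z
    using int[of 1] by simp
  have int_B: "integrable M B"
    unfolding B_def
  proof (rule integrable_norm_mult_exp_norm[OF h])
    show "integrable M (\<lambda>x. f x * h x ^ 2 * exp (z0 * h x) * exp (z * h x))" for z
      using int[of 2 "z0 + z"] by (simp add: distrib_right exp_add mult.assoc)
  qed
  fix w :: complex
  assume "norm w \<le> 1"
  let ?R = "\<lambda>x. E0 x * (exp (w * h x) - 1 - w * h x)"
  have R: "?R x = f x * exp ((z0 + w) * h x) - f x * exp (z0 * h x) - w * (f x * h x * exp (z0 * h x))" for x
    by (simp add: E0_def distrib_right exp_add algebra_simps)
  have "(\<integral>x. f x * exp ((z0 + w) * h x) \<partial>M) - (\<integral>x. f x * exp (z0 * h x) \<partial>M)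
      - w * (\<integral>x. f x * h x * exp (z0 * h x) \<partial>M) = integral\<^sup>L M ?R"
    unfolding R using int0 int1 by (simp add: Bochner_Integration.integral_diff)
  also have "norm \<dots> \<le> (\<integral>x. norm (?R x) \<partial>M)"
    by (rule integral_norm_bound)
  also have "\<dots> \<le> (\<integral>x. norm w ^ 2 * B x \<partial>M)"
  proof (intro integral_mono integrable_norm integrable_mult_right int_B)
    show "integrable M ?R"
      unfolding R using int0 int1 by (intro Bochner_Integration.integrable_diff integrable_mult_right)
    fix x
    have "norm (?R x) \<le> norm (E0 x) * (norm w ^ 2 * norm (h x) ^ 2 * exp (norm (h x)))"
      unfolding norm_mult[of "E0 x"]
      by (intro mult_left_mono norm_exp_mult_sub_1_sub_le \<open>norm w \<le> 1\<close> norm_ge_zero)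
    also have "\<dots> = norm w ^ 2 * B x"
      unfolding B_def E0_def norm_mult norm_power by algebra
    finally show "norm (?R x) \<le> norm w ^ 2 * B x" .
  qed
  finally show "norm ((\<integral>x. f x * exp ((z0 + w) * h x) \<partial>M) - (\<integral>x. f x * exp (z0 * h x) \<partial>M)
      - w * (\<integral>x. f x * h x * exp (z0 * h x) \<partial>M)) \<le> norm w ^ 2 * integral\<^sup>L M B"
    by simp
qed

section \<open>Matrix powers and their directional derivatives\<close>

definition mat_mul :: "nat \<Rightarrow> (nat \<Rightarrow> nat \<Rightarrow> 'a::comm_ring_1) \<Rightarrow> (nat \<Rightarrow> nat \<Rightarrow> 'a) \<Rightarrow> nat \<Rightarrow> nat \<Rightarrow> 'a"
  where "mat_mul L A B = (\<lambda>i j. \<Sum>l<L. A i l * B l j)"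

definition mat_eq :: "nat \<Rightarrow> (nat \<Rightarrow> nat \<Rightarrow> 'a) \<Rightarrow> (nat \<Rightarrow> nat \<Rightarrow> 'a) \<Rightarrow> bool"
  where "mat_eq L A B \<longleftrightarrow> (\<forall>i<L. \<forall>j<L. A i j = B i j)"

lemma mat_eq_refl [simp]: "mat_eq L A A"
  by (simp add: mat_eq_def)

lemma mat_eq_add:
  "mat_eq L A A' \<Longrightarrow> mat_eq L B B' \<Longrightarrow> mat_eq L (\<lambda>i j. A i j + B i j) (\<lambda>i j. A' i j + B' i j)"
  by (simp add: mat_eq_def)

lemma mat_eq_diff:
  "mat_eq L A A' \<Longrightarrow> mat_eq L B B' \<Longrightarrow> mat_eq L (\<lambda>i j. A i j - B i j) (\<lambda>i j. A' i j - B' i j)"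
  by (simp add: mat_eq_def)

lemma mat_mul_assoc: "mat_mul L (mat_mul L A B) C = mat_mul L A (mat_mul L B C)"
  unfolding mat_mul_def
  by (auto simp: sum_distrib_left sum_distrib_right mult.assoc intro!: ext sum.swap)

lemma mat_mul_cong: "mat_eq L A A' \<Longrightarrow> mat_eq L B B' \<Longrightarrow> mat_eq L (mat_mul L A B) (mat_mul L A' B')"
  unfolding mat_eq_def mat_mul_def by (auto intro!: sum.cong)

lemma mat_mul_diff_left:
  "mat_mul L (\<lambda>i j. A i j - B i j) C = (\<lambda>i j. mat_mul L A C i j - mat_mul L B C i j)"
  unfolding mat_mul_def by (auto simp: algebra_simps sum_subtractf)

lemma mat_mul_diff_right:
  "mat_mul L C (\<lambda>i j. A i j - B i j) = (\<lambda>i j. mat_mul L C A i j - mat_mul L C B i j)"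
  unfolding mat_mul_def by (auto simp: algebra_simps sum_subtractf)

lemma mat_mul_one_left: "mat_eq L (mat_mul L (\<lambda>i j. if i = j then 1 else 0) B) B"
proof -
  have "(\<Sum>l<L. (if i = l then 1 else 0) * B l j) = (\<Sum>l<L. if i = l then B l j else 0)" for i j
    by (intro sum.cong) auto
  then show ?thesis by (simp add: mat_eq_def mat_mul_def)
qed

lemma mat_mul_one_right: "mat_eq L (mat_mul L B (\<lambda>i j. if i = j then 1 else 0)) B"
proof -
  have "(\<Sum>l<L. B i l * (if l = j then 1 else 0)) = (\<Sum>l<L. if j = l then B i l else 0)" for i j
    by (intro sum.cong) auto
  then show ?thesis by (simp add: mat_eq_def mat_mul_def)
qed

lemma mpow_Suc_mat_mul: "mpow L A (Suc k) = mat_mul L (mpow L A k) A"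
  by (simp add: mat_mul_def)

lemma mtrace_cong: "mat_eq L A B \<Longrightarrow> mtrace L A = mtrace L B"
  by (simp add: mat_eq_def mtrace_def)

lemma mtrace_commutator: "mtrace L (\<lambda>i j. mat_mul L X Y i j - mat_mul L Y X i j) = 0"
  unfolding mtrace_def mat_mul_def sum_subtractf
  by (subst sum.swap) (simp add: mult.commute)

lemma mtrace_sum: "mtrace L (\<lambda>i j. \<Sum>s\<in>S. c s * M s i j) = (\<Sum>s\<in>S. c s * mtrace L (M s))"
  unfolding mtrace_def by (subst sum.swap) (simp add: sum_distrib_left)

lemma mtrace_diff: "mtrace L (\<lambda>i j. M i j - N i j) = mtrace L M - mtrace L N"
  unfolding mtrace_def by (simp add: sum_subtractf)

lemma sum_sum_delta:
  fixes i j L :: nat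
  assumes "i < L" "j < L"
  shows "(\<Sum>a<L. \<Sum>b<L. (if a = i \<and> b = j then 1 else 0) * f a b) = (f i j :: 'a::semiring_1)"
proof -
  have "(\<Sum>a<L. \<Sum>b<L. (if a = i \<and> b = j then 1 else 0) * f a b)
      = (\<Sum>ab\<in>{..<L} \<times> {..<L}. if ab = (i, j) then f (fst ab) (snd ab) else 0)"
    by (simp add: sum.cartesian_product split_beta prod_eq_iff if_distrib[of "\<lambda>z. z * _"] cong: if_cong)
  also have "\<dots> = f i j"
    using assms by (subst sum.delta) auto
  finally show ?thesis .
qed

fun mpow_deriv ::
  "nat \<Rightarrow> (nat \<Rightarrow> nat \<Rightarrow> complex) \<Rightarrow> (nat \<Rightarrow> nat \<Rightarrow> complex) \<Rightarrow> nat \<Rightarrow> nat \<Rightarrow> nat \<Rightarrow> complex"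
where
  "mpow_deriv L A Y 0 = (\<lambda>i j. 0)"
| "mpow_deriv L A Y (Suc k) = (\<lambda>i j. \<Sum>l<L. mpow_deriv L A Y k i l * A l j + mpow L A k i l * Y l j)"

lemma has_field_derivative_mpow:
  "((\<lambda>t. mpow L (\<lambda>i j. A i j + t * Y i j) k p q) has_field_derivative
      mpow_deriv L (\<lambda>i j. A i j + t0 * Y i j) Y k p q) (at t0)"
proof (induction k arbitrary: p q)
  case (Suc k)
  show ?case
    unfolding mpow.simps(2) mpow_deriv.simps(2)
    by (rule derivative_eq_intros Suc refl | simp add: ac_simps)+
qed simp

lemma mpow_deriv_Suc_mat_mul:
  "mpow_deriv L A Y (Suc k) = (\<lambda>i j. mat_mul L (mpow_deriv L A Y k) A i j + mat_mul L (mpow L A k) Y i j)"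
  by (simp add: mat_mul_def sum.distrib)

lemma mpow_deriv_cong: "mat_eq L Y Y' \<Longrightarrow> mat_eq L (mpow_deriv L A Y k) (mpow_deriv L A Y' k)"
  by (induction k) (auto simp del: mpow_deriv.simps(2) simp: mpow_deriv_Suc_mat_mul intro!: mat_eq_add mat_mul_cong)

lemma mpow_deriv_sum:
  "mpow_deriv L A (\<lambda>p q. \<Sum>s\<in>S. c s * Y s p q) k = (\<lambda>p q. \<Sum>s\<in>S. c s * mpow_deriv L A (Y s) k p q)"
proof (induction k)
  case (Suc k)
  then show ?case
    by (auto intro!: ext simp: sum_distrib_left sum_distrib_right sum.distrib algebra_simps
        sum.swap[of _ "{..<L}" S])
qed simp

lemma mpow_deriv_lincomb:
  "mpow_deriv L A (\<lambda>p q. \<alpha> * Y p q + \<beta> * Z p q) k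
    = (\<lambda>p q. \<alpha> * mpow_deriv L A Y k p q + \<beta> * mpow_deriv L A Z k p q)"
  by (induction k) (auto intro!: ext sum.cong simp: sum_distrib_left sum.distrib[symmetric] algebra_simps)

lemma mpow_deriv_commutator:
  "mat_eq L (mpow_deriv L A (\<lambda>p q. mat_mul L X A p q - mat_mul L A X p q) k)
     (\<lambda>p q. mat_mul L X (mpow L A k) p q - mat_mul L (mpow L A k) X p q)"
proof (induction k)
  case 0
  have "mat_eq L (\<lambda>p q. mat_mul L X (mpow L A 0) p q - mat_mul L (mpow L A 0) X p q) (\<lambda>p q. X p q - X p q)"
    unfolding mpow.simps(1) by (rule mat_eq_diff[OF mat_mul_one_right mat_mul_one_left])
  then show ?case by (simp add: mat_eq_def)
next
  case (Suc k)
  let ?C = "\<lambda>p q. mat_mul L X A p q - mat_mul L A X p q"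
  let ?P = "mpow L A k"
  have "mat_eq L (mpow_deriv L A ?C (Suc k))
      (\<lambda>i j. mat_mul L (\<lambda>p q. mat_mul L X ?P p q - mat_mul L ?P X p q) A i j + mat_mul L ?P ?C i j)"
    unfolding mpow_deriv_Suc_mat_mul by (rule mat_eq_add[OF mat_mul_cong[OF Suc mat_eq_refl] mat_eq_refl])
  also have "(\<lambda>i j. mat_mul L (\<lambda>p q. mat_mul L X ?P p q - mat_mul L ?P X p q) A i j + mat_mul L ?P ?C i j)
     = (\<lambda>i j. mat_mul L X (mpow L A (Suc k)) i j - mat_mul L (mpow L A (Suc k)) X i j)"
    by (simp add: mat_mul_diff_left mat_mul_diff_right mat_mul_assoc mpow_Suc_mat_mul del: mpow.simps(2))
  finally show ?case .
qed

lemma mtrace_mpow_deriv_commutator: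
  "mtrace L (mpow_deriv L A (\<lambda>p q. mat_mul L X A p q - mat_mul L A X p q) k) = 0"
  using mtrace_cong[OF mpow_deriv_commutator[of L A X k]] mtrace_commutator by simp

section \<open>Polynomials in the Hermitian coordinates\<close>

lemma herm_fun_upd:
  "herm (x(k := s)) a b = herm x a b + complex_of_real (s - x k) * herm (indicator {k}) a b"
  by (auto simp: herm_def complex_eq_iff split: split_indicator)

lemma herm_measurable:
  assumes "u < L" "v < L"
  shows "(\<lambda>x. herm x u v) \<in> borel_measurable (herm_lebesgue L)"
proof -
  have coord: "(\<lambda>x. x p) \<in> borel_measurable (herm_lebesgue L)" if "p \<in> {..<L} \<times> {..<L}" for p
    unfolding herm_lebesgue_def using that by (metis measurable_component_singleton measurable_lborel1)
  have herm_eq: "herm x u v = (if u = v then of_real (x (u, u))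
    else if u < v then of_real (x (u, v)) + \<i> * of_real (x (v, u))
    else of_real (x (v, u)) - \<i> * of_real (x (u, v)))" for x
    by (simp add: herm_def complex_eq_iff)
  show ?thesis
    unfolding herm_eq using assms
    by (cases "u = v"; cases "u < v") (auto intro!: borel_measurable_add borel_measurable_times borel_measurable_diff
        measurable_compose[OF coord borel_measurable_of_real])
qed

inductive herm_poly :: "nat \<Rightarrow> ((nat \<times> nat \<Rightarrow> real) \<Rightarrow> complex) \<Rightarrow> bool" for L :: nat
where
  const: "herm_poly L (\<lambda>x. c)"
| add: "herm_poly L P \<Longrightarrow> herm_poly L Q \<Longrightarrow> herm_poly L (\<lambda>x. P x + Q x)"
| herm_mult: "u < L \<Longrightarrow> v < L \<Longrightarrow> herm_poly L P \<Longrightarrow> herm_poly L (\<lambda>x. herm x u v * P x)"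

lemma herm_poly_scale: "herm_poly L P \<Longrightarrow> herm_poly L (\<lambda>x. c * P x)"
proof (induction rule: herm_poly.induct)
  case (add P Q)
  then show ?case using herm_poly.add by (simp add: distrib_left)
next
  case (herm_mult u v P)
  then have "herm_poly L (\<lambda>x. herm x u v * (c * P x))"
    by (intro herm_poly.herm_mult)
  then show ?case by (simp add: mult.left_commute)
qed (rule herm_poly.const)

lemma herm_poly_mult: "herm_poly L P \<Longrightarrow> herm_poly L Q \<Longrightarrow> herm_poly L (\<lambda>x. P x * Q x)"
proof (induction rule: herm_poly.induct)
  case (const c)
  then show ?case by (rule herm_poly_scale)
next
  case (add P1 P2)
  then show ?case using herm_poly.add by (simp add: distrib_right)
next
  case (herm_mult u v P)
  then show ?case using herm_poly.herm_mult by (simp add: mult.assoc)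
qed

lemma herm_poly_herm: "u < L \<Longrightarrow> v < L \<Longrightarrow> herm_poly L (\<lambda>x. herm x u v)"
  using herm_poly.herm_mult[OF _ _ herm_poly.const, of u L v 1] by simp

lemma herm_poly_diff: "herm_poly L P \<Longrightarrow> herm_poly L Q \<Longrightarrow> herm_poly L (\<lambda>x. P x - Q x)"
  using herm_poly.add[OF _ herm_poly_scale, of L P Q "-1"] by simp

lemma herm_poly_uminus: "herm_poly L P \<Longrightarrow> herm_poly L (\<lambda>x. - P x)"
  using herm_poly_scale[of L P "-1"] by simp

lemma herm_poly_sum:
  "(\<And>i. i \<in> S \<Longrightarrow> herm_poly L (P i)) \<Longrightarrow> herm_poly L (\<lambda>x. \<Sum>i\<in>S. P i x)"
proof (induction S rule: infinite_finite_induct)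
  case (insert i S)
  then show ?case by (simp add: herm_poly.add)
qed (simp_all add: herm_poly.const)

lemma herm_poly_power: "herm_poly L P \<Longrightarrow> herm_poly L (\<lambda>x. P x ^ n)"
  by (induction n) (auto intro: herm_poly_mult herm_poly.const)

lemma herm_poly_continuous_on_line:
  "herm_poly L P \<Longrightarrow> continuous_on UNIV (\<lambda>t. P (x(k := t)))"
  by (induction rule: herm_poly.induct)
    (auto simp del: fun_upd_apply simp: herm_fun_upd intro!: continuous_intros)

lemma herm_poly_mpow: "j < L \<Longrightarrow> herm_poly L (\<lambda>x. mpow L (herm x) k i j)"
  by (induction k arbitrary: i j) (auto intro!: herm_poly_sum herm_poly_mult herm_poly_herm herm_poly.const)

lemma herm_poly_mpow_deriv: "j < L \<Longrightarrow> herm_poly L (\<lambda>x. mpow_deriv L (herm x) Y k i j)"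
  by (induction k arbitrary: i j)
    (auto intro!: herm_poly_sum herm_poly_mult herm_poly.add herm_poly_herm herm_poly_mpow herm_poly.const)

section \<open>The exponent of the integrand\<close>

definition log_weight ::
  "nat \<Rightarrow> (nat \<Rightarrow> real) \<Rightarrow> nat \<Rightarrow> (nat \<Rightarrow> nat \<Rightarrow> nat \<Rightarrow> nat \<Rightarrow> complex) \<Rightarrow> (nat \<times> nat \<Rightarrow> complex)
   \<Rightarrow> (nat \<Rightarrow> nat \<Rightarrow> complex) \<Rightarrow> complex"
  where "log_weight L g K r J A = - trace_action L g K A - regulator L r A + source L J A"

definition log_weight_deriv ::
  "nat \<Rightarrow> (nat \<Rightarrow> real) \<Rightarrow> nat \<Rightarrow> (nat \<Rightarrow> nat \<Rightarrow> nat \<Rightarrow> nat \<Rightarrow> complex) \<Rightarrow> (nat \<times> nat \<Rightarrow> complex)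
   \<Rightarrow> (nat \<Rightarrow> nat \<Rightarrow> complex) \<Rightarrow> (nat \<Rightarrow> nat \<Rightarrow> complex) \<Rightarrow> complex"
  where "log_weight_deriv L g K r J A Y =
    - (\<Sum>k\<le>K. complex_of_real (g k) * mtrace L (mpow_deriv L A Y k))
    - (1/2) * (\<Sum>a<L. \<Sum>b<L. \<Sum>c<L. \<Sum>d<L. Y a b * r a b c d * A c d + A a b * r a b c d * Y c d)
    + (\<Sum>a<L. \<Sum>b<L. J (a, b) * Y a b)"

lemma integrand_eq_exp_log_weight: "integrand L g K r J x = exp (log_weight L g K r J (herm x))"
  by (simp add: integrand_def log_weight_def)

lemma has_field_derivative_log_weight:
  "((\<lambda>t. log_weight L g K r J (\<lambda>i j. A i j + t * Y i j)) has_field_derivative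
      log_weight_deriv L g K r J (\<lambda>i j. A i j + t0 * Y i j) Y) (at t0)"
  unfolding log_weight_def log_weight_deriv_def trace_action_def mtrace_def regulator_def source_def
  by (rule derivative_eq_intros has_field_derivative_mpow refl
      | simp add: algebra_simps sum.distrib sum_distrib_left)+

lemma log_weight_deriv_lincomb:
  "log_weight_deriv L g K r J A (\<lambda>p q. \<alpha> * Y p q + \<beta> * Z p q)
    = \<alpha> * log_weight_deriv L g K r J A Y + \<beta> * log_weight_deriv L g K r J A Z"
  unfolding log_weight_deriv_def mpow_deriv_lincomb mtrace_def
  by (simp add: sum.distrib sum_distrib_left algebra_simps)

lemma herm_poly_log_weight: "herm_poly L (\<lambda>x. log_weight L g K r J (herm x))"
  unfolding log_weight_def trace_action_def mtrace_def regulator_def source_def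
  by (intro herm_poly.add herm_poly_diff herm_poly_uminus herm_poly_sum herm_poly_mult herm_poly_herm
      herm_poly_mpow herm_poly.const) auto

lemma herm_poly_log_weight_deriv: "herm_poly L (\<lambda>x. log_weight_deriv L g K r J (herm x) Y)"
  unfolding log_weight_deriv_def mtrace_def
  by (intro herm_poly.add herm_poly_diff herm_poly_uminus herm_poly_sum herm_poly_mult herm_poly_herm
      herm_poly_mpow_deriv herm_poly.const) auto

lemma continuous_on_integrand_line: "continuous_on UNIV (\<lambda>t. integrand L g K r J (x(k := t)))"
  unfolding integrand_eq_exp_log_weight
  by (intro continuous_intros herm_poly_continuous_on_line[OF herm_poly_log_weight])

lemma has_vector_derivative_herm_integrand_line:
  "((\<lambda>t. herm (x(k := t)) u v * integrand L g K r J (x(k := t))) has_vector_derivative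
     ((herm (indicator {k}) u v
        + herm (x(k := s)) u v * log_weight_deriv L g K r J (herm (x(k := s))) (herm (indicator {k})))
      * integrand L g K r J (x(k := s)))) (at s)"
proof -
  define H where "H = herm (indicator {k})"
  define A where "A i j = herm x i j - complex_of_real (x k) * H i j" for i j
  have line: "herm (x(k := t)) = (\<lambda>i j. A i j + complex_of_real t * H i j)" for t
    by (intro ext) (simp add: A_def H_def herm_fun_upd algebra_simps del: fun_upd_apply)
  define \<psi> where "\<psi> z = (A u v + z * H u v) * exp (log_weight L g K r J (\<lambda>i j. A i j + z * H i j))" for z
  have "(\<psi> has_field_derivative
     (H u v * exp (log_weight L g K r J (\<lambda>i j. A i j + complex_of_real s * H i j))
      + (A u v + complex_of_real s * H u v)
        * (exp (log_weight L g K r J (\<lambda>i j. A i j + complex_of_real s * H i j))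
          * log_weight_deriv L g K r J (\<lambda>i j. A i j + complex_of_real s * H i j) H)))
     (at (complex_of_real s))"
    unfolding \<psi>_def by (rule derivative_eq_intros has_field_derivative_log_weight refl | simp)+
  from has_vector_derivative_real_field[OF this] show ?thesis
    unfolding \<psi>_def integrand_eq_exp_log_weight line H_def[symmetric]
    by (simp add: algebra_simps)
qed

lemma source_fun_upd:
  assumes "p \<in> {..<L} \<times> {..<L}"
  shows "source L (J(p := z)) A = source L J A + (z - J p) * A (fst p) (snd p)"
proof -
  obtain i j where p: "p = (i, j)" "i < L" "j < L"
    using assms by auto
  have "(J(p := z)) (a, b) * A a b = J (a, b) * A a b + (if a = i \<and> b = j then 1 else 0) * ((z - J p) * A a b)"
    for a b
    by (auto simp: p algebra_simps)
  then show ?thesis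
    using sum_sum_delta[OF p(2,3), of "\<lambda>a b. (z - J p) * A a b"]
    by (simp add: source_def sum.distrib p)
qed

lemma integrand_fun_upd:
  assumes "p \<in> {..<L} \<times> {..<L}"
  shows "integrand L g K r (J(p := z)) x = integrand L g K r (J(p := 0)) x * exp (z * herm x (fst p) (snd p))"
  unfolding integrand_def source_fun_upd[OF assms] mult_exp_exp by (simp add: algebra_simps)

section \<open>Matrix units and the pointwise Ward identity\<close>

definition unit_mat :: "nat \<Rightarrow> nat \<Rightarrow> nat \<Rightarrow> nat \<Rightarrow> complex"
  where "unit_mat i j = (\<lambda>p q. if p = i \<and> q = j then 1 else 0)"

lemma log_weight_deriv_unit_mat:
  assumes r_sym: "\<And>a b c d. a < L \<Longrightarrow> b < L \<Longrightarrow> c < L \<Longrightarrow> d < L \<Longrightarrow> r a b c d = r c d a b"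
    and "i < L" "j < L"
  shows "log_weight_deriv L g K r J A (unit_mat i j) =
    - (\<Sum>k\<le>K. complex_of_real (g k) * mtrace L (mpow_deriv L A (unit_mat i j) k))
    - (\<Sum>c<L. \<Sum>d<L. r i j c d * A c d) + J (i, j)"
proof -
  have left: "(\<Sum>a<L. \<Sum>b<L. \<Sum>c<L. \<Sum>d<L. unit_mat i j a b * r a b c d * A c d)
      = (\<Sum>c<L. \<Sum>d<L. r i j c d * A c d)"
    using sum_sum_delta[OF assms(2,3), of "\<lambda>a b. \<Sum>c<L. \<Sum>d<L. r a b c d * A c d"]
    by (simp add: unit_mat_def sum_distrib_left mult.assoc)
  have "(\<Sum>a<L. \<Sum>b<L. \<Sum>c<L. \<Sum>d<L. A a b * r a b c d * unit_mat i j c d)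
      = (\<Sum>a<L. \<Sum>b<L. \<Sum>c<L. \<Sum>d<L. (if c = i \<and> d = j then 1 else 0) * (A a b * r a b c d))"
    by (simp add: unit_mat_def mult.commute)
  also have "\<dots> = (\<Sum>a<L. \<Sum>b<L. A a b * r a b i j)"
    using assms by (simp add: sum_sum_delta)
  also have "\<dots> = (\<Sum>c<L. \<Sum>d<L. r i j c d * A c d)"
    using assms by (intro sum.cong refl) (simp add: r_sym mult.commute)
  finally have right: "(\<Sum>a<L. \<Sum>b<L. \<Sum>c<L. \<Sum>d<L. A a b * r a b c d * unit_mat i j c d)
      = (\<Sum>c<L. \<Sum>d<L. r i j c d * A c d)" .
  have source: "(\<Sum>a<L. \<Sum>b<L. J (a, b) * unit_mat i j a b) = J (i, j)"
    using sum_sum_delta[OF assms(2,3), of "\<lambda>a b. J (a, b)"] by (simp add: unit_mat_def mult.commute)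
  show ?thesis
    unfolding log_weight_deriv_def source sum.distrib left right by simp
qed

lemma mtrace_mpow_deriv_unit_mat_commutator:
  assumes "a < L" "c < L"
  shows "(\<Sum>j<L. A c j * mtrace L (mpow_deriv L A (unit_mat a j) k))
    - (\<Sum>i<L. A i a * mtrace L (mpow_deriv L A (unit_mat i c) k)) = 0"
proof -
  have commutator: "mat_eq L (\<lambda>p q. (\<Sum>j<L. A c j * unit_mat a j p q) - (\<Sum>i<L. A i a * unit_mat i c p q))
      (\<lambda>p q. mat_mul L (unit_mat a c) A p q - mat_mul L A (unit_mat a c) p q)"
  proof -
    have conj_const: "(\<Sum>l<L. if P \<and> Q l then f l else 0) = (if P then \<Sum>l<L. if Q l then f l else 0 else 0)"
      "(\<Sum>l<L. if Q l \<and> P then f l else 0) = (if P then \<Sum>l<L. if Q l then f l else 0 else 0)"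
      for P Q and f :: "nat \<Rightarrow> complex"
      by auto
    show ?thesis
      using assms by (auto simp: mat_eq_def mat_mul_def unit_mat_def conj_const
          if_distrib[of "\<lambda>z. z * _"] if_distrib[of "\<lambda>z. _ * z"] cong: if_cong)
  qed
  have "(\<Sum>j<L. A c j * mtrace L (mpow_deriv L A (unit_mat a j) k))
      - (\<Sum>i<L. A i a * mtrace L (mpow_deriv L A (unit_mat i c) k))
    = mtrace L (mpow_deriv L A (\<lambda>p q. (\<Sum>j<L. A c j * unit_mat a j p q)
      - (\<Sum>i<L. A i a * unit_mat i c p q)) k)"
    using mpow_deriv_lincomb[of L A 1 _ "-1" _ k]
    by (simp add: mpow_deriv_sum mtrace_sum mtrace_diff)
  also have "\<dots> = 0"
    using mtrace_cong[OF mpow_deriv_cong[OF commutator]] mtrace_mpow_deriv_commutator by simp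
  finally show ?thesis .
qed

lemma log_weight_deriv_ward:
  assumes r_sym: "\<And>a b c d. a < L \<Longrightarrow> b < L \<Longrightarrow> c < L \<Longrightarrow> d < L \<Longrightarrow> r a b c d = r c d a b"
    and "a < L" "c < L"
  shows "(\<Sum>j<L. A c j * log_weight_deriv L g K r J A (unit_mat a j))
      - (\<Sum>i<L. A i a * log_weight_deriv L g K r J A (unit_mat i c))
    = - (\<Sum>b<L. \<Sum>d<L. \<Sum>e<L. r a b d e * (A c b * A d e) - r b c d e * (A b a * A d e))
      + (\<Sum>b<L. J (a, b) * A c b - J (b, c) * A b a)"
proof -
  let ?S = "\<lambda>i j. \<Sum>k\<le>K. complex_of_real (g k) * mtrace L (mpow_deriv L A (unit_mat i j) k)"
  let ?R = "\<lambda>i j. \<Sum>d<L. \<Sum>e<L. r i j d e * A d e"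
  have "(\<Sum>j<L. A c j * log_weight_deriv L g K r J A (unit_mat a j))
      - (\<Sum>i<L. A i a * log_weight_deriv L g K r J A (unit_mat i c))
    = (\<Sum>j<L. A c j * (- ?S a j - ?R a j + J (a, j))) - (\<Sum>i<L. A i a * (- ?S i c - ?R i c + J (i, c)))"
    using assms by (simp add: log_weight_deriv_unit_mat[OF r_sym])
  also have "\<dots> = - ((\<Sum>j<L. A c j * ?S a j) - (\<Sum>i<L. A i a * ?S i c))
      - ((\<Sum>j<L. A c j * ?R a j) - (\<Sum>i<L. A i a * ?R i c))
      + ((\<Sum>j<L. A c j * J (a, j)) - (\<Sum>i<L. A i a * J (i, c)))"
    by (simp add: algebra_simps sum.distrib sum_subtractf)
  also have "(\<Sum>j<L. A c j * ?S a j) - (\<Sum>i<L. A i a * ?S i c)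
    = (\<Sum>k\<le>K. complex_of_real (g k) * ((\<Sum>j<L. A c j * mtrace L (mpow_deriv L A (unit_mat a j) k))
        - (\<Sum>i<L. A i a * mtrace L (mpow_deriv L A (unit_mat i c) k))))"
    by (simp add: sum_distrib_left algebra_simps sum_subtractf sum.swap[of _ "{..K}"])
  also have "\<dots> = 0"
    using mtrace_mpow_deriv_unit_mat_commutator[OF assms(2,3)] by simp
  also have "(\<Sum>j<L. A c j * ?R a j) - (\<Sum>i<L. A i a * ?R i c)
    = (\<Sum>b<L. \<Sum>d<L. \<Sum>e<L. r a b d e * (A c b * A d e) - r b c d e * (A b a * A d e))"
    by (simp add: sum_distrib_left algebra_simps sum_subtractf)
  also have "(\<Sum>j<L. A c j * J (a, j)) - (\<Sum>i<L. A i a * J (i, c))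
    = (\<Sum>b<L. J (a, b) * A c b - J (b, c) * A b a)"
    by (simp add: algebra_simps sum_subtractf)
  finally show ?thesis by simp
qed

lemma unit_mat_eq_herm_lincomb:
  assumes "i < L" "j < L"
  obtains \<alpha> \<beta> k1 k2 where "k1 \<in> {..<L} \<times> {..<L}" "k2 \<in> {..<L} \<times> {..<L}"
    and "unit_mat i j = (\<lambda>p q. \<alpha> * herm (indicator {k1}) p q + \<beta> * herm (indicator {k2}) p q)"
proof (cases i j rule: linorder_cases)
  case less
  show ?thesis
    by (rule that[of "(i, j)" "(j, i)" "1/2" "- \<i>/2"])
      (use assms less in \<open>auto simp: unit_mat_def herm_def fun_eq_iff complex_eq_iff split: split_indicator\<close>)
next
  case equal
  show ?thesis
    by (rule that[of "(i, i)" "(i, i)" 1 0])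
      (use assms equal in \<open>auto simp: unit_mat_def herm_def fun_eq_iff complex_eq_iff split: split_indicator\<close>)
next
  case greater
  show ?thesis
    by (rule that[of "(j, i)" "(i, j)" "1/2" "\<i>/2"])
      (use assms greater in \<open>auto simp: unit_mat_def herm_def fun_eq_iff complex_eq_iff split: split_indicator\<close>)
qed

section \<open>Schwinger-Dyson equations and the Ward identity\<close>

lemma integral_triple_sum:
  assumes "\<And>b d e. b < n \<Longrightarrow> d < n \<Longrightarrow> e < n \<Longrightarrow> integrable M (f b d e)"
  shows "(\<integral>x. (\<Sum>b<n. \<Sum>d<n. \<Sum>e<n. f b d e x) \<partial>M) = (\<Sum>b<n. \<Sum>d<n. \<Sum>e<n. integral\<^sup>L M (f b d e))"
proof -
  have inner: "integrable M (\<lambda>x. \<Sum>e<n. f b d e x)" if "b < n" "d < n" for b d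
    using assms that by (intro Bochner_Integration.integrable_sum) auto
  have "(\<integral>x. (\<Sum>b<n. \<Sum>d<n. \<Sum>e<n. f b d e x) \<partial>M) = (\<Sum>b<n. \<integral>x. (\<Sum>d<n. \<Sum>e<n. f b d e x) \<partial>M)"
    using assms by (intro Bochner_Integration.integral_sum Bochner_Integration.integrable_sum) auto
  also have "\<dots> = (\<Sum>b<n. \<Sum>d<n. \<integral>x. (\<Sum>e<n. f b d e x) \<partial>M)"
    using inner by (intro sum.cong refl Bochner_Integration.integral_sum) auto
  also have "\<dots> = (\<Sum>b<n. \<Sum>d<n. \<Sum>e<n. integral\<^sup>L M (f b d e))"
    using assms by (intro sum.cong refl Bochner_Integration.integral_sum) auto
  finally show ?thesis .
qed

locale regularized_matrix_model =
  fixes L :: nat and g :: "nat \<Rightarrow> real" and K :: nat and r :: "nat \<Rightarrow> nat \<Rightarrow> nat \<Rightarrow> nat \<Rightarrow> complex"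
  assumes moments_integrable: "\<And>J ms. set ms \<subseteq> {..<L} \<times> {..<L} \<Longrightarrow>
    integrable (herm_lebesgue L) (\<lambda>x. (\<Prod>p\<leftarrow>ms. herm x (fst p) (snd p)) * integrand L g K r J x)"
begin

lemma herm_poly_integrable:
  assumes "herm_poly L P"
  shows "integrable (herm_lebesgue L) (\<lambda>x. P x * integrand L g K r J x)"
proof -
  have "integrable (herm_lebesgue L) (\<lambda>x. (\<Prod>p\<leftarrow>ms. herm x (fst p) (snd p)) * P x * integrand L g K r J x)"
    if "set ms \<subseteq> {..<L} \<times> {..<L}" for ms
    using assms that
  proof (induction arbitrary: ms rule: herm_poly.induct)
    case (const c)
    then show ?case
      using integrable_mult_right[OF moments_integrable[OF const], of c] by (simp add: ac_simps)
  next
    case (add P Q)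
    then show ?case
      by (simp add: distrib_left distrib_right Bochner_Integration.integrable_add)
  next
    case (herm_mult u v P)
    then show ?case
      using herm_mult.IH[of "(u, v) # ms"] by (simp add: ac_simps)
  qed
  from this[of "[]"] show ?thesis
    by simp
qed

lemma integral_herm_poly_sum:
  "(\<And>i. i \<in> S \<Longrightarrow> herm_poly L (P i)) \<Longrightarrow>
    (\<integral>x. (\<Sum>i\<in>S. P i x) * integrand L g K r J x \<partial>herm_lebesgue L)
      = (\<Sum>i\<in>S. \<integral>x. P i x * integrand L g K r J x \<partial>herm_lebesgue L)"
  by (simp add: sum_distrib_right herm_poly_integrable Bochner_Integration.integral_sum)

lemma integral_herm_poly_diff:
  "herm_poly L P \<Longrightarrow> herm_poly L Q \<Longrightarrow>
    (\<integral>x. (P x - Q x) * integrand L g K r J x \<partial>herm_lebesgue L)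
      = (\<integral>x. P x * integrand L g K r J x \<partial>herm_lebesgue L) - (\<integral>x. Q x * integrand L g K r J x \<partial>herm_lebesgue L)"
  by (simp add: left_diff_distrib herm_poly_integrable Bochner_Integration.integral_diff)

lemma schwinger_dyson_coord:
  assumes k: "k \<in> {..<L} \<times> {..<L}" and uv: "u < L" "v < L"
  shows "(\<integral>x. (herm (indicator {k}) u v
      + herm x u v * log_weight_deriv L g K r J (herm x) (herm (indicator {k}))) * integrand L g K r J x
    \<partial>herm_lebesgue L) = 0"
proof -
  let ?P = "\<lambda>x. herm (indicator {k}) u v + herm x u v * log_weight_deriv L g K r J (herm x) (herm (indicator {k}))"
  have P: "herm_poly L ?P"
    using uv by (intro herm_poly.add herm_poly.const herm_poly_mult herm_poly_herm herm_poly_log_weight_deriv)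
  show ?thesis
    unfolding herm_lebesgue_def
  proof (rule PiM_lborel_integral_partial_deriv_eq_0[OF _ k])
    show "integrable (PiM ({..<L} \<times> {..<L}) (\<lambda>_. lborel)) (\<lambda>x. herm x u v * integrand L g K r J x)"
      using herm_poly_integrable[OF herm_poly_herm[OF uv]] unfolding herm_lebesgue_def .
    show "integrable (PiM ({..<L} \<times> {..<L}) (\<lambda>_. lborel)) (\<lambda>x. ?P x * integrand L g K r J x)"
      using herm_poly_integrable[OF P] unfolding herm_lebesgue_def .
    show "continuous_on UNIV (\<lambda>t. ?P (x(k := t)) * integrand L g K r J (x(k := t)))" for x
      by (intro continuous_on_mult herm_poly_continuous_on_line[OF P] continuous_on_integrand_line)
  qed (auto intro: has_vector_derivative_herm_integrand_line)
qed

lemma schwinger_dyson: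
  assumes ij: "i < L" "j < L" and uv: "u < L" "v < L"
  shows "(\<integral>x. ((if u = i \<and> v = j then 1 else 0) + herm x u v * log_weight_deriv L g K r J (herm x) (unit_mat i j))
      * integrand L g K r J x \<partial>herm_lebesgue L) = 0"
proof -
  obtain \<alpha> \<beta> k1 k2 where k: "k1 \<in> {..<L} \<times> {..<L}" "k2 \<in> {..<L} \<times> {..<L}"
    and E: "unit_mat i j = (\<lambda>p q. \<alpha> * herm (indicator {k1}) p q + \<beta> * herm (indicator {k2}) p q)"
    using unit_mat_eq_herm_lincomb[OF ij] .
  let ?P = "\<lambda>k x. herm (indicator {k}) u v + herm x u v * log_weight_deriv L g K r J (herm x) (herm (indicator {k}))"
  have P: "herm_poly L (?P k)" for k
    using uv by (intro herm_poly.add herm_poly.const herm_poly_mult herm_poly_herm herm_poly_log_weight_deriv)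
  have "(if u = i \<and> v = j then 1 else 0) = \<alpha> * herm (indicator {k1}) u v + \<beta> * herm (indicator {k2}) u v"
    using fun_cong[OF fun_cong[OF E, of u], of v] by (simp add: unit_mat_def)
  then have lincomb: "((if u = i \<and> v = j then 1 else 0) + herm x u v * log_weight_deriv L g K r J (herm x) (unit_mat i j))
      * integrand L g K r J x
    = \<alpha> * (?P k1 x * integrand L g K r J x) + \<beta> * (?P k2 x * integrand L g K r J x)" for x
    unfolding E log_weight_deriv_lincomb by (simp add: algebra_simps)
  have "integrable (herm_lebesgue L) (\<lambda>x. c * (?P k x * integrand L g K r J x))" for c k
    by (intro integrable_mult_right herm_poly_integrable[OF P])
  then show ?thesis
    unfolding lincomb
    by (simp add: Bochner_Integration.integral_add schwinger_dyson_coord[OF k(1) uv] schwinger_dyson_coord[OF k(2) uv])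
qed

lemma schwinger_dyson_commutator:
  assumes ac: "a < L" "c < L"
  shows "(\<integral>x. ((\<Sum>j<L. herm x c j * log_weight_deriv L g K r J (herm x) (unit_mat a j))
      - (\<Sum>i<L. herm x i a * log_weight_deriv L g K r J (herm x) (unit_mat i c)))
      * integrand L g K r J x \<partial>herm_lebesgue L) = 0"
proof -
  define \<delta> :: complex where "\<delta> = (if c = a then 1 else 0)"
  define A where "A j x = \<delta> + herm x c j * log_weight_deriv L g K r J (herm x) (unit_mat a j)" for j x
  define B where "B i x = \<delta> + herm x i a * log_weight_deriv L g K r J (herm x) (unit_mat i c)" for i x
  have poly_A: "herm_poly L (A j)" and poly_B: "herm_poly L (B j)" if "j < L" for j
    unfolding A_def B_def
    by (intro herm_poly.add herm_poly.const herm_poly_mult herm_poly_herm herm_poly_log_weight_deriv that ac)+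
  have SD_A: "(\<integral>x. A j x * integrand L g K r J x \<partial>herm_lebesgue L) = 0" if "j < L" for j
  proof -
    have "(if c = a \<and> j = j then 1 else 0) = \<delta>"
      by (simp add: \<delta>_def)
    with schwinger_dyson[OF ac(1) that ac(2) that] show ?thesis
      unfolding A_def by simp
  qed
  have SD_B: "(\<integral>x. B i x * integrand L g K r J x \<partial>herm_lebesgue L) = 0" if "i < L" for i
  proof -
    have "(if i = i \<and> a = c then 1 else 0) = \<delta>"
      by (auto simp: \<delta>_def)
    with schwinger_dyson[OF that ac(2) that ac(1)] show ?thesis
      unfolding B_def by simp
  qed
  have "(\<integral>x. ((\<Sum>j<L. herm x c j * log_weight_deriv L g K r J (herm x) (unit_mat a j))
      - (\<Sum>i<L. herm x i a * log_weight_deriv L g K r J (herm x) (unit_mat i c)))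
      * integrand L g K r J x \<partial>herm_lebesgue L)
    = (\<integral>x. ((\<Sum>j<L. A j x) - (\<Sum>i<L. B i x)) * integrand L g K r J x \<partial>herm_lebesgue L)"
    unfolding A_def B_def sum.distrib by simp
  also have "\<dots> = (\<integral>x. (\<Sum>j<L. A j x) * integrand L g K r J x \<partial>herm_lebesgue L)
      - (\<integral>x. (\<Sum>i<L. B i x) * integrand L g K r J x \<partial>herm_lebesgue L)"
    by (intro integral_herm_poly_diff herm_poly_sum) (use poly_A poly_B in auto)
  also have "\<dots> = (\<Sum>j<L. \<integral>x. A j x * integrand L g K r J x \<partial>herm_lebesgue L)
        - (\<Sum>i<L. \<integral>x. B i x * integrand L g K r J x \<partial>herm_lebesgue L)"
    using integral_herm_poly_sum[of "{..<L}" A J] integral_herm_poly_sum[of "{..<L}" B J] poly_A poly_B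
    by simp
  also have "\<dots> = 0"
    using SD_A SD_B by simp
  finally show ?thesis .
qed

lemma ward_identity_integral:
  assumes r_sym: "\<And>a b c d. a < L \<Longrightarrow> b < L \<Longrightarrow> c < L \<Longrightarrow> d < L \<Longrightarrow> r a b c d = r c d a b"
    and ac: "a < L" "c < L"
  shows "(\<integral>x. ((\<Sum>b<L. \<Sum>d<L. \<Sum>e<L. r a b d e * (herm x c b * herm x d e) - r b c d e * (herm x b a * herm x d e))
      - (\<Sum>b<L. J (a, b) * herm x c b - J (b, c) * herm x b a)) * integrand L g K r J x \<partial>herm_lebesgue L) = 0"
proof -
  define W where "W x = (\<Sum>b<L. \<Sum>d<L. \<Sum>e<L. r a b d e * (herm x c b * herm x d e) - r b c d e * (herm x b a * herm x d e))
      - (\<Sum>b<L. J (a, b) * herm x c b - J (b, c) * herm x b a)" for x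
  have "(\<Sum>j<L. herm x c j * log_weight_deriv L g K r J (herm x) (unit_mat a j))
      - (\<Sum>i<L. herm x i a * log_weight_deriv L g K r J (herm x) (unit_mat i c)) = - W x" for x
    using log_weight_deriv_ward[where r = r and A = "herm x" and g = g and K = K and J = J, OF r_sym ac]
    by (simp add: W_def)
  then have "W x * integrand L g K r J x
    = - (((\<Sum>j<L. herm x c j * log_weight_deriv L g K r J (herm x) (unit_mat a j))
      - (\<Sum>i<L. herm x i a * log_weight_deriv L g K r J (herm x) (unit_mat i c))) * integrand L g K r J x)" for x
    by simp
  then show ?thesis
    using schwinger_dyson_commutator[OF ac, of J]
    unfolding W_def by (simp only: Bochner_Integration.integral_minus neg_equal_0_iff_equal)
qed

lemma pderivJ_integral_herm_poly:
  assumes P: "herm_poly L P" and p: "p \<in> {..<L} \<times> {..<L}"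
  shows "pderivJ (\<lambda>J. \<integral>x. P x * integrand L g K r J x \<partial>herm_lebesgue L) p J
    = (\<integral>x. P x * herm x (fst p) (snd p) * integrand L g K r J x \<partial>herm_lebesgue L)"
proof -
  let ?h = "\<lambda>x. herm x (fst p) (snd p)"
  define J0 where "J0 = J(p := 0)"
  have shift: "integrand L g K r (J(p := z)) x = integrand L g K r J0 x * exp (z * ?h x)" for z x
    unfolding J0_def by (rule integrand_fun_upd[OF p])
  have at_J: "integrand L g K r J x = integrand L g K r J0 x * exp (J p * ?h x)" for x
    using shift[of "J p" x] by simp
  let ?f = "\<lambda>x. P x * integrand L g K r J0 x"
  have h: "herm_poly L ?h"
    using p by (auto intro: herm_poly_herm)
  have "((\<lambda>z. \<integral>x. ?f x * exp (z * ?h x) \<partial>herm_lebesgue L) has_field_derivative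
      (\<integral>x. ?f x * ?h x * exp (J p * ?h x) \<partial>herm_lebesgue L)) (at (J p))"
  proof (rule has_field_derivative_integral_exp)
    show "?h \<in> borel_measurable (herm_lebesgue L)"
      using p by (auto intro: herm_measurable)
    show "integrable (herm_lebesgue L) (\<lambda>x. ?f x * ?h x ^ n * exp (z * ?h x))" for z n
      using herm_poly_integrable[OF herm_poly_mult[OF P herm_poly_power[OF h]], where J = "J(p := z)"]
      by (simp add: shift ac_simps)
  qed
  then show ?thesis
    unfolding pderivJ_def shift at_J by (simp add: DERIV_imp_deriv ac_simps)
qed

lemma Zpart_pderivJ:
  assumes "c < L" "b < L"
  shows "pderivJ (Zpart L g K r) (c, b) = (\<lambda>J. \<integral>x. herm x c b * integrand L g K r J x \<partial>herm_lebesgue L)"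
proof
  fix J
  show "pderivJ (Zpart L g K r) (c, b) J = (\<integral>x. herm x c b * integrand L g K r J x \<partial>herm_lebesgue L)"
    using pderivJ_integral_herm_poly[OF herm_poly.const, of "(c, b)" 1 J] assms
    by (simp add: Zpart_def[abs_def])
qed

lemma pderivJ_integral_herm:
  assumes "c < L" "b < L" "d < L" "e < L"
  shows "pderivJ (\<lambda>J. \<integral>x. herm x c b * integrand L g K r J x \<partial>herm_lebesgue L) (d, e) J
    = (\<integral>x. herm x c b * herm x d e * integrand L g K r J x \<partial>herm_lebesgue L)"
  using pderivJ_integral_herm_poly[OF herm_poly_herm[OF assms(1,2)], of "(d, e)" J] assms(3,4) by simp

lemma ward_identity_moments:
  assumes r_sym: "\<And>a b c d. a < L \<Longrightarrow> b < L \<Longrightarrow> c < L \<Longrightarrow> d < L \<Longrightarrow> r a b c d = r c d a b"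
    and ac: "a < L" "c < L"
  shows "(\<Sum>b<L. \<Sum>d<L. \<Sum>e<L.
      r a b d e * (\<integral>x. herm x c b * herm x d e * integrand L g K r J x \<partial>herm_lebesgue L)
      - r b c d e * (\<integral>x. herm x b a * herm x d e * integrand L g K r J x \<partial>herm_lebesgue L))
    - (\<Sum>b<L. J (a, b) * (\<integral>x. herm x c b * integrand L g K r J x \<partial>herm_lebesgue L)
      - J (b, c) * (\<integral>x. herm x b a * integrand L g K r J x \<partial>herm_lebesgue L)) = 0"
proof -
  have int1: "integrable (herm_lebesgue L) (\<lambda>x. z * herm x i j * integrand L g K r J x)"
    if "i < L" "j < L" for z i j
    using that by (intro herm_poly_integrable herm_poly_scale herm_poly_herm)
  have int2: "integrable (herm_lebesgue L) (\<lambda>x. z * (herm x i j * herm x k l) * integrand L g K r J x)"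
    if "i < L" "j < L" "k < L" "l < L" for z i j k l
    using that by (intro herm_poly_integrable herm_poly_scale herm_poly_mult herm_poly_herm)
  define T where "T = (\<lambda>b d e x. r a b d e * (herm x c b * herm x d e) * integrand L g K r J x
      - r b c d e * (herm x b a * herm x d e) * integrand L g K r J x)"
  define U where "U = (\<lambda>b x. J (a, b) * herm x c b * integrand L g K r J x
      - J (b, c) * herm x b a * integrand L g K r J x)"
  have int_T: "integrable (herm_lebesgue L) (T b d e)" if "b < L" "d < L" "e < L" for b d e
    unfolding T_def using that ac by (intro Bochner_Integration.integrable_diff int2)
  have int_U: "integrable (herm_lebesgue L) (U b)" if "b < L" for b
    unfolding U_def using that ac by (intro Bochner_Integration.integrable_diff int1)
  have "0 = (\<integral>x. ((\<Sum>b<L. \<Sum>d<L. \<Sum>e<L. r a b d e * (herm x c b * herm x d e) - r b c d e * (herm x b a * herm x d e))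
      - (\<Sum>b<L. J (a, b) * herm x c b - J (b, c) * herm x b a)) * integrand L g K r J x \<partial>herm_lebesgue L)"
    using ward_identity_integral[OF r_sym ac] by simp
  also have "\<dots> = (\<integral>x. (\<Sum>b<L. \<Sum>d<L. \<Sum>e<L. T b d e x) - (\<Sum>b<L. U b x) \<partial>herm_lebesgue L)"
    unfolding T_def U_def by (simp only: sum_distrib_right left_diff_distrib)
  also have "\<dots> = (\<Sum>b<L. \<Sum>d<L. \<Sum>e<L. integral\<^sup>L (herm_lebesgue L) (T b d e))
      - (\<Sum>b<L. integral\<^sup>L (herm_lebesgue L) (U b))"
  proof -
    have "integrable (herm_lebesgue L) (\<lambda>x. \<Sum>b<L. \<Sum>d<L. \<Sum>e<L. T b d e x)"
      using int_T by (intro Bochner_Integration.integrable_sum) auto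
    moreover have "integrable (herm_lebesgue L) (\<lambda>x. \<Sum>b<L. U b x)"
      using int_U by (intro Bochner_Integration.integrable_sum) auto
    ultimately show ?thesis
      using int_U by (simp add: Bochner_Integration.integral_diff integral_triple_sum[OF int_T])
  qed
  finally show ?thesis
    using ac int1 int2 by (simp add: T_def U_def mult.assoc)
qed

end

theorem theorem1:
  fixes \<Lambda> K :: nat and g :: "nat \<Rightarrow> real"
    and r :: "nat \<Rightarrow> nat \<Rightarrow> nat \<Rightarrow> nat \<Rightarrow> complex"
    and J :: "nat \<times> nat \<Rightarrow> complex" and a c :: nat
  assumes "\<Lambda> \<ge> 1"
    and r_sym: "\<And>a b c d. a < \<Lambda> \<Longrightarrow> b < \<Lambda> \<Longrightarrow> c < \<Lambda> \<Longrightarrow> d < \<Lambda> \<Longrightarrow> r a b c d = r c d a b"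
    and conv: "\<And>J' ms. set ms \<subseteq> {..<\<Lambda>} \<times> {..<\<Lambda>} \<Longrightarrow>
        integrable (herm_lebesgue \<Lambda>)
          (\<lambda>x. (\<Prod>p\<leftarrow>ms. herm x (fst p) (snd p)) * integrand \<Lambda> g K r J' x)"
    and "a < \<Lambda>" and "c < \<Lambda>"
  shows "(\<Sum>b<\<Lambda>. \<Sum>d<\<Lambda>. \<Sum>e<\<Lambda>.
            r a b d e * pderivJ (pderivJ (Zpart \<Lambda> g K r) (c, b)) (d, e) J
          - r b c d e * pderivJ (pderivJ (Zpart \<Lambda> g K r) (b, a)) (d, e) J)
       - (\<Sum>b<\<Lambda>. J (a, b) * pderivJ (Zpart \<Lambda> g K r) (c, b) J
          - J (b, c) * pderivJ (Zpart \<Lambda> g K r) (b, a) J) = 0"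
proof -
  interpret regularized_matrix_model \<Lambda> g K r
    using conv by unfold_locales
  show ?thesis
    using ward_identity_moments[OF r_sym assms(4,5), of J] assms(4,5)
    by (simp add: Zpart_pderivJ pderivJ_integral_herm)
qed

end
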